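(* Let $A=\mathbb{C}[x_1,\dots,x_M,\xi_1,\dots,\xi_N]$ be the free commutative superalgebra on even variables $x_1,\dots,x_M$ and odd variables $\xi_1,\dots,\xi_N$, and let $A^\circ=\mathbb{C}[x_1,\dots,x_M]$ be its quotient by the ideal generated by the odd variables. Let $q_1,\dots,q_n\in A$ be even elements with images $q_1^\circ,\dots,q_n^\circ\in A^\circ$. Assume: whenever $f_1^\circ,\dots,f_n^\circ\in A^\circ$ satisfy $\sum_i q_i^\circ f_i^\circ=0$, there exist $F^\circ_{ij}\in A^\circ$ with $F^\circ_{ij}=-F^\circ_{ji}$ and $f_i^\circ=\sum_jF^\circ_{ij}q_j^\circ$ for all $i$. Then whenever $f_1,\dots,f_n\in A$ satisfy $\sum_iq_if_i=0$, there exist $F_{ij}\in A$ with $F_{ij}=-F_{ji}$ ($i,j=1,\dots,n$) and $f_i=\sum_jF_{ij}q_j$ for all $i$. *)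

theory Defs
  imports Complex_Main "HOL-Library.Poly_Mapping" "HOL-Library.Function_Algebras"
begin

text \<open>Commutative polynomials over the complex numbers in even variables x_0, x_1, ...:
  a monomial is an exponent vector; a polynomial is a finitely
  supported map from monomials to coefficients (convolution product).\<close>
type_synonym cpoly = "(nat \<Rightarrow>\<^sub>0 nat) \<Rightarrow>\<^sub>0 complex"

definition in_Acirc :: "nat \<Rightarrow> cpoly \<Rightarrow> bool" where
  "in_Acirc M p \<longleftrightarrow> (\<forall>m \<in> Poly_Mapping.keys p. Poly_Mapping.keys m \<subseteq> {..<M})"

text \<open>Elements of the free commutative superalgebra: an element is written
  sum over finite sets S of odd indices of  p_S * xi_S, where xi_S is the product of
  the xi_s, s in S, in increasing order. We represent it by the coefficient
  function S \<mapsto> p_S.\<close>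
type_synonym salg = "nat set \<Rightarrow> cpoly"

definition in_A :: "nat \<Rightarrow> nat \<Rightarrow> salg \<Rightarrow> bool" where
  "in_A M N f \<longleftrightarrow> (\<forall>S. f S \<noteq> 0 \<longrightarrow> S \<subseteq> {..<N}) \<and> (\<forall>S. in_Acirc M (f S))"

text \<open>Sign arising from xi_T * xi_U = sgn T U * xi_(T \<union> U) for disjoint T, U.\<close>
definition sa_sign :: "nat set \<Rightarrow> nat set \<Rightarrow> cpoly" where
  "sa_sign T U = (- 1) ^ card {(t, u). t \<in> T \<and> u \<in> U \<and> u < t}"

text \<open>Product in the superalgebra (odd variables anticommute, square to zero).\<close>
definition sa_mult :: "salg \<Rightarrow> salg \<Rightarrow> salg" where
  "sa_mult f g S = (\<Sum>T | T \<subseteq> S. sa_sign T (S - T) * (f T * g (S - T)))"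

definition sa_even :: "salg \<Rightarrow> bool" where
  "sa_even f \<longleftrightarrow> (\<forall>S. odd (card S) \<longrightarrow> f S = 0)"

text \<open>The quotient map A \<rightarrow> A0 modulo the ideal generated by the odd variables.\<close>
definition sa_red :: "salg \<Rightarrow> cpoly" where
  "sa_red f = f {}"

end

theory Submission imports Defs begin

text \<open>Filter the superalgebra by the powers J^k of the ideal J generated by the odd variables.
  If f is a syzygy of the q_i lying in J^k, then for every set S of k odd indices the
  coefficients f_i S form a syzygy of the reductions of the q_i, because in lowest odd degree
  only the constant part of q_i contributes. The hypothesis yields antisymmetric coefficients
  for these, and the combination of the q_j with any antisymmetric matrix is itself a
  (Koszul) syzygy since the even q_i commute with everything. Subtracting it moves f into
  J^(k+1), and J^(N+1) = 0.\<close>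

lemma sum_fun_apply: "(\<Sum>i\<in>A. f i) x = (\<Sum>i\<in>A. f i x)"
  by (induction A rule: infinite_finite_induct) auto

lemma sum_eq_single:
  assumes "finite A" "a \<in> A" "\<And>x. x \<in> A \<Longrightarrow> x \<noteq> a \<Longrightarrow> g x = 0"
  shows "sum g A = g a"
  using assms by (simp add: sum.remove sum.neutral)

lemma sum_antisymmetric_eq_0:
  fixes X :: "'a \<Rightarrow> 'a \<Rightarrow> 'b::{ring_char_0, semiring_no_zero_divisors}"
  assumes "\<And>i j. i \<in> A \<Longrightarrow> j \<in> A \<Longrightarrow> X j i = - X i j"
  shows "(\<Sum>i\<in>A. \<Sum>j\<in>A. X i j) = 0"
proof -
  let ?\<Sigma> = "\<Sum>i\<in>A. \<Sum>j\<in>A. X i j"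
  have "?\<Sigma> = (\<Sum>j\<in>A. \<Sum>i\<in>A. X i j)" by (rule sum.swap)
  also have "\<dots> = (\<Sum>j\<in>A. \<Sum>i\<in>A. - X j i)"
    by (intro sum.cong refl assms)
  also have "\<dots> = - ?\<Sigma>"
    by (simp add: sum_negf)
  finally have "2 * ?\<Sigma> = 0"
    by (simp add: mult_2 eq_neg_iff_add_eq_0)
  then show ?thesis by simp
qed

lemma sum_Pow_nested:
  assumes "finite S"
  shows "(\<Sum>U\<in>Pow S. \<Sum>T\<in>Pow U. g T U) = (\<Sum>T\<in>Pow S. \<Sum>V\<in>Pow (S - T). g T (T \<union> V))"
proof -
  have "(\<Sum>U\<in>Pow S. \<Sum>T\<in>Pow U. g T U) = (\<Sum>U\<in>Pow S. \<Sum>T\<in>{T\<in>Pow S. T \<subseteq> U}. g T U)"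
    by (rule sum.cong) (auto intro!: sum.cong)
  also have "\<dots> = (\<Sum>T\<in>Pow S. \<Sum>U\<in>{U\<in>Pow S. T \<subseteq> U}. g T U)"
    by (rule sum.swap_restrict) (use assms in auto)
  also have "\<dots> = (\<Sum>T\<in>Pow S. \<Sum>V\<in>Pow (S - T). g T (T \<union> V))"
  proof (rule sum.cong[OF refl])
    fix T assume "T \<in> Pow S"
    then show "(\<Sum>U\<in>{U\<in>Pow S. T \<subseteq> U}. g T U) = (\<Sum>V\<in>Pow (S - T). g T (T \<union> V))"
      by (intro sum.reindex_bij_witness[of _ "\<lambda>V. T \<union> V" "\<lambda>U. U - T"]) (auto simp: Un_absorb1)
  qed
  finally show ?thesis .
qed

lemma in_Acirc_zero [simp]: "in_Acirc M 0"
  by (simp add: in_Acirc_def)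

lemma in_Acirc_one [simp]: "in_Acirc M 1"
  by (simp add: in_Acirc_def)

lemma in_Acirc_add:
  assumes "in_Acirc M p" "in_Acirc M q"
  shows "in_Acirc M (p + q)"
  unfolding in_Acirc_def
proof
  fix m assume "m \<in> Poly_Mapping.keys (p + q)"
  then have "m \<in> Poly_Mapping.keys p \<or> m \<in> Poly_Mapping.keys q"
    using keys_add[of p q] by blast
  with assms show "Poly_Mapping.keys m \<subseteq> {..<M}"
    unfolding in_Acirc_def by blast
qed

lemma in_Acirc_uminus: "in_Acirc M p \<Longrightarrow> in_Acirc M (- p)"
  by (simp add: in_Acirc_def keys_def)

lemma in_Acirc_mult:
  assumes "in_Acirc M p" "in_Acirc M q"
  shows "in_Acirc M (p * q)"
  unfolding in_Acirc_def
proof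
  fix m assume "m \<in> Poly_Mapping.keys (p * q)"
  then obtain x y where "m = x + y" "x \<in> Poly_Mapping.keys p" "y \<in> Poly_Mapping.keys q"
    using keys_mult by blast
  with assms show "Poly_Mapping.keys m \<subseteq> {..<M}"
    using keys_add[of x y] unfolding in_Acirc_def by blast
qed

lemma in_Acirc_sum: "(\<And>i. i \<in> A \<Longrightarrow> in_Acirc M (f i)) \<Longrightarrow> in_Acirc M (\<Sum>i\<in>A. f i)"
  by (induction A rule: infinite_finite_induct) (simp_all add: in_Acirc_add)

lemma in_Acirc_sa_sign: "in_Acirc M (sa_sign T U)"
proof -
  have "in_Acirc M ((- 1) ^ k)" for k
    by (induction k) (simp_all add: in_Acirc_mult in_Acirc_uminus)
  then show ?thesis by (simp add: sa_sign_def)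
qed

lemma in_A_zero [simp]: "in_A M N 0"
  by (simp add: in_A_def)

lemma in_A_add: "in_A M N f \<Longrightarrow> in_A M N g \<Longrightarrow> in_A M N (f + g)"
  unfolding in_A_def by (metis in_Acirc_add add.right_neutral plus_fun_apply)

lemma in_A_uminus: "in_A M N f \<Longrightarrow> in_A M N (- f)"
  unfolding in_A_def by (simp add: in_Acirc_uminus)

lemma in_A_diff: "in_A M N f \<Longrightarrow> in_A M N g \<Longrightarrow> in_A M N (f - g)"
  using in_A_add[of M N f "- g"] in_A_uminus[of M N g] by simp

lemma in_A_sum: "(\<And>i. i \<in> A \<Longrightarrow> in_A M N (f i)) \<Longrightarrow> in_A M N (\<Sum>i\<in>A. f i)"
  by (induction A rule: infinite_finite_induct) (auto intro: in_A_add)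

lemma sa_mult_Pow: "sa_mult f g S = (\<Sum>T\<in>Pow S. sa_sign T (S - T) * (f T * g (S - T)))"
  by (simp add: sa_mult_def Pow_def)

lemma sa_mult_infinite: "infinite S \<Longrightarrow> sa_mult f g S = 0"
  by (simp add: sa_mult_Pow)

lemma in_A_sa_mult:
  assumes f: "in_A M N f" and g: "in_A M N g"
  shows "in_A M N (sa_mult f g)"
  unfolding in_A_def
proof (intro conjI allI impI)
  fix S assume "sa_mult f g S \<noteq> 0"
  then obtain T where "T \<subseteq> S" "f T \<noteq> 0" "g (S - T) \<noteq> 0"
    unfolding sa_mult_def by (force elim: sum.not_neutral_contains_not_neutral)
  with f g have "T \<subseteq> {..<N}" "S - T \<subseteq> {..<N}"
    by (auto simp: in_A_def)
  then show "S \<subseteq> {..<N}" by blast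
next
  fix S show "in_Acirc M (sa_mult f g S)"
    unfolding sa_mult_def using f g
    by (intro in_Acirc_sum in_Acirc_mult in_Acirc_sa_sign) (simp_all add: in_A_def)
qed

definition inversions :: "nat set \<Rightarrow> nat set \<Rightarrow> (nat \<times> nat) set" where
  "inversions T U = {(t, u). t \<in> T \<and> u \<in> U \<and> u < t}"

lemma sa_sign_inversions: "sa_sign T U = (- 1) ^ card (inversions T U)"
  by (simp add: sa_sign_def inversions_def)

lemma finite_inversions: "finite T \<Longrightarrow> finite U \<Longrightarrow> finite (inversions T U)"
  by (rule finite_subset[of _ "T \<times> U"]) (auto simp: inversions_def)

lemma sa_sign_empty_left [simp]: "sa_sign {} U = 1"
  by (simp add: sa_sign_def)

lemma sa_sign_empty_right [simp]: "sa_sign T {} = 1"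
  by (simp add: sa_sign_def)

lemma sa_sign_mult_self: "sa_sign T U * sa_sign T U = 1"
  by (simp add: sa_sign_def power_add[symmetric])

lemma sa_sign_Un_left:
  assumes "finite A" "finite B" "finite C" "A \<inter> B = {}"
  shows "sa_sign (A \<union> B) C = sa_sign A C * sa_sign B C"
proof -
  have "inversions (A \<union> B) C = inversions A C \<union> inversions B C"
    "inversions A C \<inter> inversions B C = {}"
    using assms(4) by (auto simp: inversions_def)
  then have "card (inversions (A \<union> B) C) = card (inversions A C) + card (inversions B C)"
    by (simp add: card_Un_disjoint finite_inversions assms)
  then show ?thesis
    by (simp add: sa_sign_inversions power_add)
qed

lemma sa_sign_Un_right:
  assumes "finite A" "finite B" "finite C" "B \<inter> C = {}"
  shows "sa_sign A (B \<union> C) = sa_sign A B * sa_sign A C"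
proof -
  have "inversions A (B \<union> C) = inversions A B \<union> inversions A C"
    "inversions A B \<inter> inversions A C = {}"
    using assms(4) by (auto simp: inversions_def)
  then have "card (inversions A (B \<union> C)) = card (inversions A B) + card (inversions A C)"
    by (simp add: card_Un_disjoint finite_inversions assms)
  then show ?thesis
    by (simp add: sa_sign_inversions power_add)
qed

lemma sa_sign_assoc:
  assumes "finite T" "finite V" "finite C" "T \<inter> V = {}" "V \<inter> C = {}" "T \<inter> C = {}"
  shows "sa_sign (T \<union> V) C * sa_sign T V = sa_sign T (V \<union> C) * sa_sign V C"
  using assms by (simp add: sa_sign_Un_left sa_sign_Un_right mult_ac)

lemma card_inversions_swap:
  assumes "finite T" "finite U" "T \<inter> U = {}"
  shows "card (inversions U T) + card (inversions T U) = card T * card U"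
proof -
  define R where "R = {(t, u). t \<in> T \<and> u \<in> U \<and> t < u}"
  have "inversions U T = prod.swap ` R"
    by (auto simp: inversions_def R_def image_iff)
  then have "card (inversions U T) = card R"
    by (simp add: card_image)
  moreover have "T \<times> U = inversions T U \<union> R" "inversions T U \<inter> R = {}"
    using assms(3) by (auto simp: inversions_def R_def)
  moreover have "finite R"
    by (rule finite_subset[of _ "T \<times> U"]) (auto simp: R_def assms)
  ultimately show ?thesis
    by (metis add.commute assms(1,2) card_Un_disjoint card_cartesian_product finite_inversions)
qed

lemma sa_sign_swap_even:
  assumes "finite T" "finite U" "T \<inter> U = {}" "even (card T)"
  shows "sa_sign U T = sa_sign T U"
proof -
  have swap: "sa_sign U T * sa_sign T U = 1"
    using card_inversions_swap[OF assms(1-3)] assms(4)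
    by (metis sa_sign_inversions power_add even_mult_iff neg_one_even_power)
  have "sa_sign U T = sa_sign U T * (sa_sign T U * sa_sign T U)"
    by (simp add: sa_sign_mult_self)
  also have "\<dots> = sa_sign T U"
    by (simp only: mult.assoc[symmetric] swap mult_1_left)
  finally show ?thesis .
qed

lemma sa_mult_zero_right [simp]: "sa_mult f 0 = 0"
  by (simp add: fun_eq_iff sa_mult_def)

lemma sa_mult_add_left: "sa_mult (f + h) g = sa_mult f g + sa_mult h g"
  by (simp add: fun_eq_iff sa_mult_def sum.distrib[symmetric] ring_distribs)

lemma sa_mult_add_right: "sa_mult f (g + h) = sa_mult f g + sa_mult f h"
  by (simp add: fun_eq_iff sa_mult_def sum.distrib[symmetric] ring_distribs)

lemma sa_mult_uminus_left: "sa_mult (- f) g = - sa_mult f g"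
  by (simp add: fun_eq_iff sa_mult_def sum_negf[symmetric])

lemma sa_mult_uminus_right: "sa_mult f (- g) = - sa_mult f g"
  by (simp add: fun_eq_iff sa_mult_def sum_negf[symmetric])

lemma sa_mult_diff_right: "sa_mult f (g - h) = sa_mult f g - sa_mult f h"
  using sa_mult_add_right[of f g "- h"] by (simp add: sa_mult_uminus_right)

lemma sa_mult_sum_right: "sa_mult f (\<Sum>j\<in>A. g j) = (\<Sum>j\<in>A. sa_mult f (g j))"
  by (induction A rule: infinite_finite_induct)
    (metis sa_mult_zero_right sum.infinite, metis sa_mult_zero_right sum.empty,
     metis sa_mult_add_right sum.insert)

lemma sa_mult_assoc: "sa_mult (sa_mult f g) h = sa_mult f (sa_mult g h)"
proof (rule ext)
  fix S
  show "sa_mult (sa_mult f g) h S = sa_mult f (sa_mult g h) S"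
  proof (cases "finite S")
    case False
    then show ?thesis by (simp add: sa_mult_infinite)
  next
    case True
    define \<phi> where "\<phi> T U = sa_sign U (S - U) * sa_sign T (U - T) * (f T * (g (U - T) * h (S - U)))"
      for T U
    have "sa_mult (sa_mult f g) h S = (\<Sum>U\<in>Pow S. \<Sum>T\<in>Pow U. \<phi> T U)"
      by (simp add: sa_mult_Pow \<phi>_def sum_distrib_left sum_distrib_right mult.assoc)
    also have "\<dots> = (\<Sum>T\<in>Pow S. \<Sum>V\<in>Pow (S - T). \<phi> T (T \<union> V))"
      using True by (rule sum_Pow_nested)
    also have "\<dots> = (\<Sum>T\<in>Pow S. \<Sum>V\<in>Pow (S - T).
        sa_sign T (S - T) * (f T * (sa_sign V (S - T - V) * (g V * h (S - T - V)))))"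
    proof (intro sum.cong refl)
      fix T V assume T: "T \<in> Pow S" and V: "V \<in> Pow (S - T)"
      define C where "C = S - T - V"
      have "finite T" "finite V" "finite C"
        using True T V by (auto simp: C_def intro: finite_subset)
      moreover have "T \<inter> V = {}" "V \<inter> C = {}" "T \<inter> C = {}"
        using V by (auto simp: C_def)
      ultimately have "sa_sign (T \<union> V) C * sa_sign T V = sa_sign T (V \<union> C) * sa_sign V C"
        by (rule sa_sign_assoc)
      moreover have "S - (T \<union> V) = C" "T \<union> V - T = V" "S - T = V \<union> C" "V \<union> C - V = C"
        using T V by (auto simp: C_def)
      ultimately show "\<phi> T (T \<union> V) =
          sa_sign T (S - T) * (f T * (sa_sign V (S - T - V) * (g V * h (S - T - V))))"
        by (simp add: \<phi>_def C_def[symmetric] mult_ac)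
    qed
    also have "\<dots> = sa_mult f (sa_mult g h) S"
      by (simp add: sa_mult_Pow sum_distrib_left)
    finally show ?thesis .
  qed
qed

lemma sa_mult_commute_even:
  assumes "sa_even f"
  shows "sa_mult f g = sa_mult g f"
proof (rule ext)
  fix S
  show "sa_mult f g S = sa_mult g f S"
  proof (cases "finite S")
    case False
    then show ?thesis by (simp add: sa_mult_infinite)
  next
    case True
    have "sa_mult g f S = (\<Sum>T\<in>Pow S. sa_sign (S - T) T * (g (S - T) * f T))"
      unfolding sa_mult_Pow
      by (rule sum.reindex_bij_witness[of _ "\<lambda>U. S - U" "\<lambda>U. S - U"]) (auto simp: double_diff)
    also have "\<dots> = sa_mult f g S"
      unfolding sa_mult_Pow
    proof (rule sum.cong[OF refl])
      fix T assume T: "T \<in> Pow S"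
      show "sa_sign (S - T) T * (g (S - T) * f T) = sa_sign T (S - T) * (f T * g (S - T))"
      proof (cases "even (card T)")
        case True
        then have "sa_sign (S - T) T = sa_sign T (S - T)"
          using \<open>finite S\<close> T by (intro sa_sign_swap_even) (auto intro: finite_subset)
        then show ?thesis by (simp add: mult_ac)
      next
        case False
        then show ?thesis using assms by (simp add: sa_even_def)
      qed
    qed
    finally show ?thesis by simp
  qed
qed

lemma sa_syzygy_antisymmetric:
  assumes even: "\<And>i. i \<in> A \<Longrightarrow> sa_even (q i)"
    and antisym: "\<And>i j. i \<in> A \<Longrightarrow> j \<in> A \<Longrightarrow> G j i = - G i j"
  shows "(\<Sum>i\<in>A. sa_mult (q i) (\<Sum>j\<in>A. sa_mult (G i j) (q j))) = 0"
proof -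
  define X where "X i j = sa_mult (G i j) (sa_mult (q i) (q j))" for i j
  have "sa_mult (q i) (sa_mult (G i j) (q j)) = X i j" if "i \<in> A" for i j
    using even[OF that] by (metis X_def sa_mult_assoc sa_mult_commute_even)
  then have "(\<Sum>i\<in>A. sa_mult (q i) (\<Sum>j\<in>A. sa_mult (G i j) (q j))) = (\<Sum>i\<in>A. \<Sum>j\<in>A. X i j)"
    by (simp add: sa_mult_sum_right)
  also have "\<dots> = 0"
  proof
    fix S
    have "X j i S = - X i j S" if "i \<in> A" "j \<in> A" for i j
      using even antisym that by (metis X_def sa_mult_commute_even sa_mult_uminus_left uminus_apply)
    then show "(\<Sum>i\<in>A. \<Sum>j\<in>A. X i j) S = 0 S"
      unfolding sum_fun_apply zero_fun_apply by (rule sum_antisymmetric_eq_0)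
  qed
  finally show ?thesis .
qed

text \<open>vanishes_below k f means f \<in> J^k in the notation above.\<close>

definition vanishes_below :: "nat \<Rightarrow> salg \<Rightarrow> bool" where
  "vanishes_below k f \<longleftrightarrow> (\<forall>S. finite S \<and> card S < k \<longrightarrow> f S = 0)"

lemma vanishes_below_sa_mult_left:
  assumes "vanishes_below k f"
  shows "vanishes_below k (sa_mult f g)"
  unfolding vanishes_below_def
proof (intro allI impI)
  fix S :: "nat set" assume S: "finite S \<and> card S < k"
  have "f T = 0" if "T \<in> Pow S" for T
  proof -
    have "finite T" "card T \<le> card S"
      using S that by (auto intro: finite_subset card_mono)
    with assms S show ?thesis
      by (simp add: vanishes_below_def)
  qed
  then show "sa_mult f g S = 0"
    by (simp add: sa_mult_Pow)
qed

lemma sa_mult_lowest_left: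
  assumes "vanishes_below k f" "finite S" "card S = k"
  shows "sa_mult f g S = f S * g {}"
proof -
  have "sa_mult f g S = sa_sign S (S - S) * (f S * g (S - S))"
    unfolding sa_mult_Pow
  proof (rule sum_eq_single)
    fix T assume "T \<in> Pow S" "T \<noteq> S"
    then have "card T < k"
      using assms(2,3) by (auto intro: psubset_card_mono)
    with assms(1,2) \<open>T \<in> Pow S\<close> have "f T = 0"
      by (auto simp: vanishes_below_def intro: finite_subset)
    then show "sa_sign T (S - T) * (f T * g (S - T)) = 0" by simp
  qed (use assms in auto)
  then show ?thesis by simp
qed

lemma sa_mult_lowest_right:
  assumes "vanishes_below k g" "finite S" "card S = k"
  shows "sa_mult f g S = f {} * g S"
proof -
  have "sa_mult f g S = sa_sign {} (S - {}) * (f {} * g (S - {}))"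
    unfolding sa_mult_Pow
  proof (rule sum_eq_single)
    fix T assume "T \<in> Pow S" "T \<noteq> {}"
    then have "card (S - T) < k"
      using assms(2,3) by (auto intro: psubset_card_mono)
    with assms(1,2) have "g (S - T) = 0"
      by (simp add: vanishes_below_def)
    then show "sa_sign T (S - T) * (f T * g (S - T)) = 0" by simp
  qed (use assms in auto)
  then show ?thesis by simp
qed

lemma in_A_vanishes_below_eq_0:
  assumes "in_A M N f" "N < k" "vanishes_below k f"
  shows "f = 0"
proof
  fix S show "f S = 0 S"
  proof (rule ccontr)
    assume "f S \<noteq> 0 S"
    then have "S \<subseteq> {..<N}"
      using assms(1) by (simp add: in_A_def)
    then have "finite S" "card S < k"
      using assms(2) card_mono[of "{..<N}" S] finite_subset by fastforce+
    with \<open>f S \<noteq> 0 S\<close> assms(3) show False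
      by (simp add: vanishes_below_def)
  qed
qed

lemma sum_sa_mult_lowest_right:
  assumes "\<And>i. i \<in> A \<Longrightarrow> vanishes_below k (f i)" "finite S" "card S = k"
  shows "(\<Sum>i\<in>A. sa_mult (q i) (f i)) S = (\<Sum>i\<in>A. sa_red (q i) * f i S)"
  unfolding sum_fun_apply
  using assms by (intro sum.cong refl) (simp add: sa_red_def sa_mult_lowest_right[of k])

lemma vanishes_below_Suc_diff:
  assumes f_low: "vanishes_below k f" and G_low: "\<And>j. j \<in> A \<Longrightarrow> vanishes_below k (G j)"
    and lowest: "\<And>T. finite T \<Longrightarrow> card T = k \<Longrightarrow> f T = (\<Sum>j\<in>A. G j T * sa_red (q j))"
  shows "vanishes_below (Suc k) (f - (\<Sum>j\<in>A. sa_mult (G j) (q j)))"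
  unfolding vanishes_below_def
proof (intro allI impI)
  fix T :: "nat set" assume T: "finite T \<and> card T < Suc k"
  then consider "card T < k" | "card T = k"
    by linarith
  then show "(f - (\<Sum>j\<in>A. sa_mult (G j) (q j))) T = 0"
  proof cases
    case 1
    moreover have "vanishes_below k (sa_mult (G j) (q j))" if "j \<in> A" for j
      using G_low[OF that] by (rule vanishes_below_sa_mult_left)
    ultimately have "f T = 0" "\<And>j. j \<in> A \<Longrightarrow> sa_mult (G j) (q j) T = 0"
      using f_low T by (auto simp: vanishes_below_def)
    then show ?thesis by (simp add: sum_fun_apply)
  next
    case 2
    then have "sa_mult (G j) (q j) T = G j T * sa_red (q j)" if "j \<in> A" for j
      using T G_low[OF that] by (simp add: sa_mult_lowest_left sa_red_def)
    then show ?thesis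
      using lowest[of T] T 2 by (simp add: sum_fun_apply)
  qed
qed

context
  fixes M N n :: nat and q :: "nat \<Rightarrow> salg"
  assumes q_in: "\<forall>i<n. in_A M N (q i) \<and> sa_even (q i)"
    and reduced_syzygies: "\<forall>fc :: nat \<Rightarrow> cpoly.
       (\<forall>i<n. in_Acirc M (fc i)) \<and> (\<Sum>i<n. sa_red (q i) * fc i) = 0 \<longrightarrow>
       (\<exists>F :: nat \<Rightarrow> nat \<Rightarrow> cpoly.
          (\<forall>i<n. \<forall>j<n. in_Acirc M (F i j) \<and> F i j = - F j i) \<and>
          (\<forall>i<n. fc i = (\<Sum>j<n. F i j * sa_red (q j))))"
begin

lemma syzygy_lift_lowest_degree:
  assumes f_in: "\<forall>i<n. in_A M N (f i)" and f_syz: "(\<Sum>i<n. sa_mult (q i) (f i)) = 0"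
    and f_low: "\<forall>i<n. vanishes_below k (f i)"
  obtains G where "\<forall>i<n. \<forall>j<n. in_A M N (G i j) \<and> G i j = - G j i"
    and "\<forall>i<n. vanishes_below (Suc k) (f i - (\<Sum>j<n. sa_mult (G i j) (q j)))"
proof -
  define decomposes where "decomposes S F \<longleftrightarrow>
      (\<forall>i<n. \<forall>j<n. in_Acirc M (F i j) \<and> F i j = - F j i) \<and>
      (\<forall>i<n. f i S = (\<Sum>j<n. F i j * sa_red (q j)))" for S and F :: "nat \<Rightarrow> nat \<Rightarrow> cpoly"
  have "\<exists>F. decomposes S F" if S: "finite S" "card S = k" for S
    unfolding decomposes_def
  proof (rule reduced_syzygies[rule_format, of "\<lambda>i. f i S"], intro conjI allI impI)
    show "in_Acirc M (f i S)" if "i < n" for i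
      using f_in that by (simp add: in_A_def)
    show "(\<Sum>i<n. sa_red (q i) * f i S) = 0"
      using sum_sa_mult_lowest_right[of "{..<n}" k f S q] f_low f_syz S by simp
  qed
  then obtain \<Phi> where \<Phi>: "\<And>S. finite S \<Longrightarrow> card S = k \<Longrightarrow> decomposes S (\<Phi> S)"
    by metis
  have \<Phi>_in: "in_Acirc M (\<Phi> S i j)"
    and \<Phi>_antisym: "\<Phi> S i j = - \<Phi> S j i"
    and \<Phi>_eq: "f i S = (\<Sum>j<n. \<Phi> S i j * sa_red (q j))"
    if "finite S" "card S = k" "i < n" "j < n" for S i j
    using \<Phi>[OF that(1,2)] that(3,4) unfolding decomposes_def by blast+
  define G where "G i j S = (if finite S \<and> card S = k \<and> S \<subseteq> {..<N} then \<Phi> S i j else 0)"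
    for i j S
  have G_in: "in_A M N (G i j)" if "i < n" "j < n" for i j
    unfolding in_A_def
  proof (intro conjI allI impI)
    show "S \<subseteq> {..<N}" if "G i j S \<noteq> 0" for S
      using that by (simp add: G_def split: if_splits)
    show "in_Acirc M (G i j S)" for S
      using \<Phi>_in \<open>i < n\<close> \<open>j < n\<close> by (simp add: G_def)
  qed
  have G_antisym: "G i j = - G j i" if "i < n" "j < n" for i j
  proof
    show "G i j S = (- G j i) S" for S
      using \<Phi>_antisym[of S i j] that by (simp add: G_def)
  qed
  have "vanishes_below (Suc k) (f i - (\<Sum>j<n. sa_mult (G i j) (q j)))" if "i < n" for i
  proof (rule vanishes_below_Suc_diff)
    show "vanishes_below k (f i)" "vanishes_below k (G i j)" for j
      using f_low \<open>i < n\<close> by (auto simp: vanishes_below_def G_def)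
    show "f i T = (\<Sum>j<n. G i j T * sa_red (q j))" if "finite T" "card T = k" for T
    proof (cases "T \<subseteq> {..<N}")
      case True
      with that \<Phi>_eq[of T i] \<open>i < n\<close> show ?thesis by (simp add: G_def)
    next
      case False
      with f_in \<open>i < n\<close> show ?thesis by (auto simp: in_A_def G_def)
    qed
  qed
  with G_in G_antisym that show thesis by blast
qed

lemma syzygy_decomposition_from_degree:
  assumes "\<forall>i<n. in_A M N (f i)" "(\<Sum>i<n. sa_mult (q i) (f i)) = 0"
    and "\<forall>i<n. vanishes_below k (f i)"
  shows "\<exists>F. (\<forall>i<n. \<forall>j<n. in_A M N (F i j) \<and> F i j = - F j i) \<and>
             (\<forall>i<n. f i = (\<Sum>j<n. sa_mult (F i j) (q j)))"
  using assms
proof (induction "Suc N - k" arbitrary: k f)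
  case 0
  then have "\<forall>i<n. f i = 0"
    using in_A_vanishes_below_eq_0[of M N _ k] by simp
  then show ?case
    by (intro exI[of _ "\<lambda>i j. 0"]) (simp add: in_A_def sa_mult_def fun_eq_iff)
next
  case (Suc m)
  obtain G where G: "\<forall>i<n. \<forall>j<n. in_A M N (G i j) \<and> G i j = - G j i"
    and r_low: "\<forall>i<n. vanishes_below (Suc k) (f i - (\<Sum>j<n. sa_mult (G i j) (q j)))"
    using syzygy_lift_lowest_degree[OF Suc.prems] by blast
  have G_in: "in_A M N (G i j)" and G_antisym: "G i j = - G j i" if "i < n" "j < n" for i j
    using G that by blast+
  define r where "r i = f i - (\<Sum>j<n. sa_mult (G i j) (q j))" for i
  have r_in: "\<forall>i<n. in_A M N (r i)"
    unfolding r_def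
  proof (intro allI impI in_A_diff in_A_sum in_A_sa_mult)
    fix i assume "i < n"
    then show "in_A M N (f i)"
      using Suc.prems(1) by simp
    fix j assume "j \<in> {..<n}"
    with \<open>i < n\<close> show "in_A M N (G i j)" "in_A M N (q j)"
      using q_in G_in by simp_all
  qed
  have "(\<Sum>i<n. sa_mult (q i) (\<Sum>j<n. sa_mult (G i j) (q j))) = 0"
  proof (rule sa_syzygy_antisymmetric)
    show "sa_even (q i)" if "i \<in> {..<n}" for i
      using q_in that by simp
    show "G j i = - G i j" if "i \<in> {..<n}" "j \<in> {..<n}" for i j
      using G_antisym[of j i] that by simp
  qed
  then have r_syz: "(\<Sum>i<n. sa_mult (q i) (r i)) = 0"
    using Suc.prems(2) by (simp add: r_def sa_mult_diff_right sum_subtractf)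
  have "Suc N - Suc k = m"
    using Suc.hyps(2) by simp
  moreover have "\<forall>i<n. vanishes_below (Suc k) (r i)"
    using r_low by (simp add: r_def)
  ultimately obtain F where F: "\<forall>i<n. \<forall>j<n. in_A M N (F i j) \<and> F i j = - F j i"
    and r_eq: "\<forall>i<n. r i = (\<Sum>j<n. sa_mult (F i j) (q j))"
    using Suc.hyps(1) r_in r_syz by blast
  show ?case
  proof (intro exI[of _ "\<lambda>i j. F i j + G i j"] conjI allI impI)
    fix i j assume ij: "i < n" "j < n"
    then have "in_A M N (F i j)" "F i j = - F j i"
      using F by blast+
    with G_in[OF ij] G_antisym[OF ij]
    show "in_A M N (F i j + G i j)" "F i j + G i j = - (F j i + G j i)"
      by (simp_all only: in_A_add minus_add_distrib)
  next
    fix i assume "i < n"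
    then show "f i = (\<Sum>j<n. sa_mult (F i j + G i j) (q j))"
      using r_eq by (simp add: r_def sa_mult_add_left sum.distrib algebra_simps)
  qed
qed

end

theorem mainTheorem4:
  fixes M N n :: nat and q :: "nat \<Rightarrow> salg"
  assumes q_in: "\<forall>i<n. in_A M N (q i) \<and> sa_even (q i)"
    and hyp: "\<forall>fc :: nat \<Rightarrow> cpoly.
       (\<forall>i<n. in_Acirc M (fc i)) \<and> (\<Sum>i<n. sa_red (q i) * fc i) = 0 \<longrightarrow>
       (\<exists>F :: nat \<Rightarrow> nat \<Rightarrow> cpoly.
          (\<forall>i<n. \<forall>j<n. in_Acirc M (F i j) \<and> F i j = - F j i) \<and>
          (\<forall>i<n. fc i = (\<Sum>j<n. F i j * sa_red (q j))))"
  shows "\<forall>f :: nat \<Rightarrow> salg.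
       (\<forall>i<n. in_A M N (f i)) \<and> (\<Sum>i<n. sa_mult (q i) (f i)) = 0 \<longrightarrow>
       (\<exists>F :: nat \<Rightarrow> nat \<Rightarrow> salg.
          (\<forall>i<n. \<forall>j<n. in_A M N (F i j) \<and> F i j = - F j i) \<and>
          (\<forall>i<n. f i = (\<Sum>j<n. sa_mult (F i j) (q j))))"
proof (intro allI impI)
  fix f :: "nat \<Rightarrow> salg"
  assume "(\<forall>i<n. in_A M N (f i)) \<and> (\<Sum>i<n. sa_mult (q i) (f i)) = 0"
  moreover have "\<forall>i<n. vanishes_below 0 (f i)"
    by (simp add: vanishes_below_def)
  ultimately show "\<exists>F. (\<forall>i<n. \<forall>j<n. in_A M N (F i j) \<and> F i j = - F j i) \<and>
      (\<forall>i<n. f i = (\<Sum>j<n. sa_mult (F i j) (q j)))"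
    using syzygy_decomposition_from_degree[OF q_in hyp] by blast
qed

end
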